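(* For every fixed integer $\Delta\ge 2$ there is a constant $\kappa=\kappa(\Delta)>0$ such that for arbitrarily large values of $|V|$ there exists a partition exchange economy with cycle bound $\Delta$ and only $n=3$ organizations whose $\lfloor\kappa|V|\rfloor$-supplemented core is empty. (That is, $\Omega(|V|)$ additional altruistic donors may be necessary.)
   Context: A partition exchange economy consists of organizations $N=\{1,\dots,n\}$; pairwise disjoint finite sets $V^1,\dots,V^n$, $V=\bigcup_iV^i$; patient sets $U^i\subseteq V^i$; a directed compatibility graph $\mathcal G=(V,E)$; and a cycle bound $\Delta$. An exchange among $W\subseteq V$ is a set of vertex-disjoint directed cycles of length at most $\Delta$ in $\mathcal G[W]$; $u_i(\mathcal E)$ is the number of vertices of $U^i$ lying on cycles of $\mathcal E$. Given a finite set $V^0$ of new vertices (additional altruistic donors, in no organization), $\mathcal G^{+V^0}$ adds these vertices, an arc from every other vertex into each $a\in V^0$, and for each $a\in V^0$ arcs from $a$ to an arbitrarily chosen set of vertices; exchanges in $\mathcal G^{+V^0}$ are sets of vertex-disjoint cycles of length $\le\Delta$ in it. A nonempty coalition $P\subseteq N$ blocks an exchange $\mathcal E$ if some exchange $\mathcal E'$ among $\bigcup_{i\in P}V^i$ (in $\mathcal G$) has $u_i(\mathcal E')>u_i(\mathcal E)$ for all $i\in P$. An exchange of $\mathcal G^{+V^0}$ blocked by no coalition is in the $V^0$-supplemented core. The $d$-supplemented core is nonempty if for some $V^0$ with $|V^0|\le d$ and some choice of its out-arcs the $V^0$-supplemented core is nonempty; otherwise it is empty. *)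

theory Defs
  imports Complex_Main
begin

text \<open>Organizations are 1..n; vertices are natural
numbers (so that fresh altruistic-donor vertices can always be added).
Vo i = V^i, Uo i = U^i (patients), E = arcs of the compatibility graph.\<close>

definition econ_V :: "nat \<Rightarrow> (nat \<Rightarrow> nat set) \<Rightarrow> nat set" where
  "econ_V n Vo = (\<Union>i\<in>{1..n}. Vo i)"

definition valid_economy ::
  "nat \<Rightarrow> (nat \<Rightarrow> nat set) \<Rightarrow> (nat \<Rightarrow> nat set) \<Rightarrow> (nat \<times> nat) set \<Rightarrow> bool" where
  "valid_economy n Vo Uo E \<longleftrightarrow>
     (\<forall>i\<in>{1..n}. finite (Vo i) \<and> Uo i \<subseteq> Vo i) \<and>
     (\<forall>i\<in>{1..n}. \<forall>j\<in>{1..n}. i \<noteq> j \<longrightarrow> Vo i \<inter> Vo j = {}) \<and>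
     E \<subseteq> econ_V n Vo \<times> econ_V n Vo \<and> (\<forall>v. (v, v) \<notin> E)"

definition is_cycle :: "('v \<times> 'v) set \<Rightarrow> nat \<Rightarrow> 'v set \<Rightarrow> 'v list \<Rightarrow> bool" where
  "is_cycle E \<Delta> W c \<longleftrightarrow> c \<noteq> [] \<and> distinct c \<and> length c \<le> \<Delta> \<and> set c \<subseteq> W \<and>
     (\<forall>i<length c. (c ! i, c ! ((i + 1) mod length c)) \<in> E)"

definition exchange :: "('v \<times> 'v) set \<Rightarrow> nat \<Rightarrow> 'v set \<Rightarrow> 'v list set \<Rightarrow> bool" where
  "exchange E \<Delta> W X \<longleftrightarrow> (\<forall>c\<in>X. is_cycle E \<Delta> W c) \<and>
     (\<forall>c\<in>X. \<forall>c'\<in>X. c \<noteq> c' \<longrightarrow> set c \<inter> set c' = {})"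

definition utility :: "'v set \<Rightarrow> 'v list set \<Rightarrow> nat" where
  "utility U X = card (U \<inter> (\<Union>c\<in>X. set c))"

definition supp_graph :: "nat set \<Rightarrow> (nat \<times> nat) set \<Rightarrow> nat set \<Rightarrow> (nat \<Rightarrow> nat set) \<Rightarrow> (nat \<times> nat) set" where
  "supp_graph V E V0 Out = E \<union> {(x, a). a \<in> V0 \<and> x \<in> V \<union> V0 \<and> x \<noteq> a}
      \<union> {(a, y). a \<in> V0 \<and> y \<in> Out a}"

definition blocks ::
  "nat \<Rightarrow> (nat \<Rightarrow> nat set) \<Rightarrow> (nat \<Rightarrow> nat set) \<Rightarrow> (nat \<times> nat) set \<Rightarrow> nat \<Rightarrow> nat set \<Rightarrow> nat list set \<Rightarrow> bool" where
  "blocks n Vo Uo E \<Delta> P X \<longleftrightarrow> P \<noteq> {} \<and> P \<subseteq> {1..n} \<and>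
     (\<exists>X'. exchange E \<Delta> (\<Union>i\<in>P. Vo i) X' \<and> (\<forall>i\<in>P. utility (Uo i) X' > utility (Uo i) X))"

definition in_supp_core ::
  "nat \<Rightarrow> (nat \<Rightarrow> nat set) \<Rightarrow> (nat \<Rightarrow> nat set) \<Rightarrow> (nat \<times> nat) set \<Rightarrow> nat \<Rightarrow> nat set \<Rightarrow> (nat \<Rightarrow> nat set)
    \<Rightarrow> nat list set \<Rightarrow> bool" where
  "in_supp_core n Vo Uo E \<Delta> V0 Out X \<longleftrightarrow>
     exchange (supp_graph (econ_V n Vo) E V0 Out) \<Delta> (econ_V n Vo \<union> V0) X \<and>
     (\<forall>P. \<not> blocks n Vo Uo E \<Delta> P X)"

definition supp_core_empty ::
  "nat \<Rightarrow> (nat \<Rightarrow> nat set) \<Rightarrow> (nat \<Rightarrow> nat set) \<Rightarrow> (nat \<times> nat) set \<Rightarrow> nat \<Rightarrow> nat \<Rightarrow> bool" where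
  "supp_core_empty n Vo Uo E \<Delta> d \<longleftrightarrow>
     \<not> (\<exists>V0 Out X. finite V0 \<and> card V0 \<le> d \<and> V0 \<inter> econ_V n Vo = {} \<and>
          (\<forall>a\<in>V0. Out a \<subseteq> (econ_V n Vo \<union> V0) - {a}) \<and>
          in_supp_core n Vo Uo E \<Delta> V0 Out X)"

end

theory Submission
  imports Defs "HOL-Library.Countable"
begin

(*
  The economy consists of 2m hubs and 3m stars. In a hub, each organization i owns
  a path of length ceil(Delta/2) (i = 1) or floor(Delta/2) (i = 2, 3) headed by one of its
  patients, with arcs from the end of every path to the heads of the two other paths. Two paths
  fit into a cycle of length at most Delta, three do not, so a hub contributes at most two
  patients to any exchange. Star j of organization a is a donor of a compatible with a patient of
  a and with a patient of the next organization; at most one of them is served. Hence every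
  exchange of the economy serves at most 7m patients, and supplementing it by V0 serves at most
  Delta |V0| more.
  Conversely, organization a alone can serve the m patients of its stars, and the pair a, a + 1
  can serve 3m + 3m or 2m + 4m patients (joining their two paths in every hub, plus stars).
  An exchange blocked by none of these coalitions serves at least 8m patients, which is
  impossible when Delta |V0| < m. As |V| <= (6 Delta + 9) m, kappa = 1 / (Delta (6 Delta + 9) + 1)
  works.
*)

section \<open>Cycles, exchanges and utilities\<close>

definition covered :: "'v list set \<Rightarrow> 'v set" where
  "covered X = (\<Union>c\<in>X. set c)"

lemma utility_eq_card_covered: "utility U X = card (U \<inter> covered X)"
  by (simp add: utility_def covered_def)

lemma successively_upt_0: "successively P [0..<n] \<longleftrightarrow> (\<forall>k. Suc k < n \<longrightarrow> P k (Suc k))"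
  by (simp add: successively_conv_nth)

lemma is_cycleI:
  assumes "c \<noteq> []" "distinct c" "length c \<le> d" "set c \<subseteq> W"
    and "successively (\<lambda>x y. (x, y) \<in> E) c" "(last c, hd c) \<in> E"
  shows "is_cycle E d W c"
  unfolding is_cycle_def
proof (intro conjI allI impI; (rule assms)?)
  fix i assume i: "i < length c"
  show "(c ! i, c ! ((i + 1) mod length c)) \<in> E"
  proof (cases "Suc i < length c")
    case True
    then show ?thesis using successively_nth[OF assms(5) True] by simp
  next
    case False
    then have "i = length c - 1" using i by simp
    then show ?thesis using assms(1,6) i by (simp add: last_conv_nth hd_conv_nth)
  qed
qed

lemma is_cycle_two:
  assumes "(x, y) \<in> E" "(y, x) \<in> E" "x \<noteq> y" "2 \<le> d" "x \<in> W" "y \<in> W"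
  shows "is_cycle E d W [x, y]"
  using assms by (intro is_cycleI) auto

lemma is_cycle_successor:
  assumes "is_cycle E d W c" "x \<in> set c"
  obtains y where "y \<in> set c" "(x, y) \<in> E"
proof -
  obtain i where i: "i < length c" "c ! i = x" using assms(2) by (auto simp: in_set_conv_nth)
  then have "(x, c ! ((i + 1) mod length c)) \<in> E" "c ! ((i + 1) mod length c) \<in> set c"
    using assms(1) by (auto simp: is_cycle_def)
  then show ?thesis using that by blast
qed

lemma is_cycle_forced_successor:
  assumes "is_cycle E d W c" "x \<in> set c" "\<And>y. (x, y) \<in> E \<Longrightarrow> y = z"
  shows "z \<in> set c"
  using is_cycle_successor[OF assms(1,2)] assms(3) by metis

lemma is_cycle_successor_inj:
  assumes "is_cycle E d W c" "x \<in> set c" "x' \<in> set c"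
    and "\<And>y. (x, y) \<in> E \<Longrightarrow> y = z" "\<And>y. (x', y) \<in> E \<Longrightarrow> y = z"
  shows "x = x'"
proof -
  let ?n = "length c"
  have dist: "distinct c" and arcs: "\<And>i. i < ?n \<Longrightarrow> (c ! i, c ! ((i + 1) mod ?n)) \<in> E"
    using assms(1) by (auto simp: is_cycle_def)
  obtain p q where pq: "p < ?n" "c ! p = x" "q < ?n" "c ! q = x'"
    using assms(2,3) by (auto simp: in_set_conv_nth)
  then have "c ! ((p + 1) mod ?n) = c ! ((q + 1) mod ?n)"
    using arcs assms(4,5) by metis
  then have "(p + 1) mod ?n = (q + 1) mod ?n"
    using pq by (subst (asm) nth_eq_iff_index_eq[OF dist]) (auto intro: mod_less_divisor)
  then have "p = q" using pq by (auto simp: mod_Suc split: if_splits)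
  then show ?thesis using pq by simp
qed

lemma exchange_common_successor:
  assumes "exchange E d W X" "x \<in> covered X" "x' \<in> covered X"
    and "\<And>y. (x, y) \<in> E \<Longrightarrow> y = z" "\<And>y. (x', y) \<in> E \<Longrightarrow> y = z"
  shows "x = x'"
proof -
  obtain c c' where c: "c \<in> X" "x \<in> set c" and c': "c' \<in> X" "x' \<in> set c'"
    using assms(2,3) by (auto simp: covered_def)
  have cyc: "is_cycle E d W c" "is_cycle E d W c'"
    using assms(1) c c' by (auto simp: exchange_def)
  have "z \<in> set c \<inter> set c'"
    using is_cycle_forced_successor[OF cyc(1) c(2) assms(4)]
      is_cycle_forced_successor[OF cyc(2) c'(2) assms(5)] by blast
  then have "c = c'" using assms(1) c c' by (auto simp: exchange_def)
  then show ?thesis using is_cycle_successor_inj[OF cyc(1) c(2) _ assms(4,5)] c' by simp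
qed

lemma exchangeI_owner:
  assumes "\<And>c. c \<in> X \<Longrightarrow> is_cycle E d W c"
    and "\<And>c x. c \<in> X \<Longrightarrow> x \<in> set c \<Longrightarrow> owner x = c"
  shows "exchange E d W X"
  unfolding exchange_def using assms by blast

lemma is_cycle_map:
  assumes "inj f" "is_cycle E d W c"
  shows "is_cycle (map_prod f f ` E) d (f ` W) (map f c)"
  using assms unfolding is_cycle_def by (auto simp: distinct_map inj_on_subset)

lemma exchange_map:
  assumes "inj f" "exchange E d W X"
  shows "exchange (map_prod f f ` E) d (f ` W) (map f ` X)"
  unfolding exchange_def
proof (intro conjI ballI impI)
  fix c assume "c \<in> map f ` X"
  then show "is_cycle (map_prod f f ` E) d (f ` W) c"
    using assms is_cycle_map[OF assms(1)] by (auto simp: exchange_def)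
next
  fix c c' assume "c \<in> map f ` X" "c' \<in> map f ` X" "c \<noteq> c'"
  then obtain c0 c0' where "c0 \<in> X" "c0' \<in> X" "c0 \<noteq> c0'" "c = map f c0" "c' = map f c0'"
    by blast
  then show "set c \<inter> set c' = {}"
    using assms unfolding exchange_def by (simp add: image_Int[symmetric])
qed

lemma is_cycle_map_vimage:
  assumes "inj f" "is_cycle (map_prod f f ` E) d W (map f c)"
  shows "is_cycle E d (f -` W) c"
proof -
  have inj: "inj (map_prod f f)" using map_prod_inj_on[OF assms(1) assms(1)] by simp
  have "(x, y) \<in> E" if "(f x, f y) \<in> map_prod f f ` E" for x y
    using inj_image_mem_iff[OF inj, of "(x, y)"] that by simp
  then show ?thesis
    using assms unfolding is_cycle_def by (auto simp: distinct_map)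
qed

lemma is_cycle_map_inv_id:
  assumes "is_cycle (map_prod f f ` E) d W c"
  shows "c = map f (map (inv f) c)"
proof -
  have "x \<in> range f" if x: "x \<in> set c" for x
  proof -
    obtain y where "(x, y) \<in> map_prod f f ` E" using is_cycle_successor[OF assms x] by blast
    then show ?thesis by auto
  qed
  then show ?thesis by (simp add: map_idI f_inv_into_f)
qed

lemma exchange_map_vimage:
  assumes "inj f" "exchange (map_prod f f ` E) d W Y"
  obtains Y' where "exchange E d (f -` W) Y'" "Y = map f ` Y'"
proof
  have cyc: "is_cycle (map_prod f f ` E) d W c" if "c \<in> Y" for c
    using assms(2) that by (simp add: exchange_def)
  show "Y = map f ` map (inv f) ` Y"
    using is_cycle_map_inv_id[OF cyc] by (force simp: image_image)
  show "exchange E d (f -` W) (map (inv f) ` Y)"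
    unfolding exchange_def
  proof (intro conjI ballI impI)
    fix c assume "c \<in> map (inv f) ` Y"
    then obtain c0 where "c0 \<in> Y" "c = map (inv f) c0" by blast
    then show "is_cycle E d (f -` W) c"
      using is_cycle_map_vimage[OF assms(1)] is_cycle_map_inv_id[OF cyc] cyc by metis
  next
    fix c c' assume "c \<in> map (inv f) ` Y" "c' \<in> map (inv f) ` Y" "c \<noteq> c'"
    then obtain c0 c0' where c0: "c0 \<in> Y" "c0' \<in> Y" "c = map (inv f) c0" "c' = map (inv f) c0'"
      by blast
    then have "c0 \<noteq> c0'" using \<open>c \<noteq> c'\<close> by blast
    then have "set (map f c) \<inter> set (map f c') = {}"
      using assms(2) c0 is_cycle_map_inv_id[OF cyc] by (metis exchange_def)
    then show "set c \<inter> set c' = {}" by auto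
  qed
qed

lemma utility_map:
  assumes "inj f"
  shows "utility (f ` U) (map f ` X) = utility U X"
proof -
  have "f ` U \<inter> covered (map f ` X) = f ` (U \<inter> covered X)"
    using assms by (auto simp: covered_def image_Int image_UN)
  then show ?thesis
    using assms by (simp add: utility_eq_card_covered card_image inj_on_subset)
qed

lemma card_le_utility:
  assumes "finite U" "K \<subseteq> U" "K \<subseteq> covered X"
  shows "card K \<le> utility U X"
  unfolding utility_eq_card_covered using assms by (intro card_mono) auto

lemma utility_Un_le: "utility U (Y \<union> Z) \<le> utility U Y + utility U Z"
proof -
  have "U \<inter> covered (Y \<union> Z) = (U \<inter> covered Y) \<union> (U \<inter> covered Z)"
    by (auto simp: covered_def)
  then show ?thesis unfolding utility_eq_card_covered by (metis card_Un_le)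
qed

lemma sum_utility_disjoint:
  assumes "finite I" "\<And>i. i \<in> I \<Longrightarrow> finite (U i)" "\<And>i j. i \<in> I \<Longrightarrow> j \<in> I \<Longrightarrow> i \<noteq> j \<Longrightarrow> U i \<inter> U j = {}"
  shows "(\<Sum>i\<in>I. utility (U i) X) = utility (\<Union>i\<in>I. U i) X"
proof -
  have "(\<Union>i\<in>I. U i) \<inter> covered X = (\<Union>i\<in>I. U i \<inter> covered X)" by blast
  moreover have "card (\<Union>i\<in>I. U i \<inter> covered X) = (\<Sum>i\<in>I. card (U i \<inter> covered X))"
    using assms by (intro card_UN_disjoint) blast+
  ultimately show ?thesis unfolding utility_eq_card_covered by simp
qed

lemma exchange_supp_graph_avoiding:
  assumes "exchange (supp_graph V E V0 Out) d (V \<union> V0) X"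
  shows "exchange E d V {c \<in> X. set c \<inter> V0 = {}}"
  unfolding exchange_def
proof (intro conjI ballI impI)
  fix c assume c: "c \<in> {c \<in> X. set c \<inter> V0 = {}}"
  then have cyc: "is_cycle (supp_graph V E V0 Out) d (V \<union> V0) c" and avoid: "set c \<inter> V0 = {}"
    using assms by (auto simp: exchange_def)
  have "(x, y) \<in> E" if "(x, y) \<in> supp_graph V E V0 Out" "x \<in> set c" "y \<in> set c" for x y
    using that avoid by (auto simp: supp_graph_def)
  then show "is_cycle E d V c"
    using cyc avoid unfolding is_cycle_def by (auto intro: mod_less_divisor)
next
  fix c c' assume "c \<in> {c \<in> X. set c \<inter> V0 = {}}" "c' \<in> {c \<in> X. set c \<inter> V0 = {}}" "c \<noteq> c'"
  then show "set c \<inter> set c' = {}" using assms by (simp add: exchange_def)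
qed

lemma exchange_meeting_card_le:
  assumes "exchange E d W X" "finite A"
  shows "finite {c \<in> X. set c \<inter> A \<noteq> {}}" "card {c \<in> X. set c \<inter> A \<noteq> {}} \<le> card A"
proof -
  let ?Z = "{c \<in> X. set c \<inter> A \<noteq> {}}"
  define pick where "pick c = (SOME a. a \<in> set c \<inter> A)" for c
  have pick: "pick c \<in> set c \<inter> A" if "c \<in> ?Z" for c
  proof -
    have "\<exists>a. a \<in> set c \<inter> A" using that by blast
    then show ?thesis unfolding pick_def by (rule someI_ex)
  qed
  have inj: "inj_on pick ?Z"
  proof (rule inj_onI)
    fix c c' assume c: "c \<in> ?Z" "c' \<in> ?Z" "pick c = pick c'"
    then have "set c \<inter> set c' \<noteq> {}" using pick[of c] pick[of c'] by auto
    then show "c = c'" using assms(1) c unfolding exchange_def by blast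
  qed
  have sub: "pick ` ?Z \<subseteq> A" using pick by blast
  show "finite ?Z" using finite_imageD[OF finite_subset[OF sub assms(2)] inj] .
  show "card ?Z \<le> card A" using card_inj_on_le[OF inj sub assms(2)] .
qed

lemma utility_meeting_le:
  assumes "exchange E d W X" "finite A"
  shows "utility U {c \<in> X. set c \<inter> A \<noteq> {}} \<le> d * card A"
proof -
  let ?Z = "{c \<in> X. set c \<inter> A \<noteq> {}}"
  have len: "card (set c) \<le> d" if "c \<in> ?Z" for c
  proof -
    have "length c \<le> d" using that assms(1) unfolding exchange_def is_cycle_def by blast
    then show ?thesis using card_length[of c] by linarith
  qed
  have finZ: "finite ?Z" using exchange_meeting_card_le[OF assms] by blast
  have "utility U ?Z \<le> card (covered ?Z)"
    unfolding utility_eq_card_covered covered_def using finZ by (intro card_mono) auto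
  also have "\<dots> \<le> (\<Sum>c\<in>?Z. card (set c))"
    unfolding covered_def by (rule card_UN_le[OF finZ])
  also have "\<dots> \<le> (\<Sum>c\<in>?Z. d)" by (rule sum_mono) (rule len)
  also have "\<dots> = d * card ?Z" by simp
  also have "\<dots> \<le> d * card A" using exchange_meeting_card_le(2)[OF assms] by simp
  finally show ?thesis .
qed

lemma utility_supp_graph_le:
  assumes "exchange (supp_graph V E V0 Out) d (V \<union> V0) X" "finite V0"
  shows "utility U X \<le> utility U {c \<in> X. set c \<inter> V0 = {}} + d * card V0"
proof -
  let ?Y = "{c \<in> X. set c \<inter> V0 = {}}" and ?Z = "{c \<in> X. set c \<inter> V0 \<noteq> {}}"
  have "?Y \<union> ?Z = X" by blast
  then have "utility U X \<le> utility U ?Y + utility U ?Z" using utility_Un_le[of U ?Y ?Z] by simp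
  then show ?thesis using utility_meeting_le[OF assms, of U] by simp
qed

lemma blocks_map:
  fixes f :: "'v \<Rightarrow> nat"
  assumes "inj f" "P \<noteq> {}" "P \<subseteq> {1..n}" "exchange E d (\<Union>i\<in>P. Vo i) X'"
    and "\<And>i. i \<in> P \<Longrightarrow> utility (f ` Uo i) X < utility (Uo i) X'"
  shows "blocks n (\<lambda>i. f ` Vo i) (\<lambda>i. f ` Uo i) (map_prod f f ` E) d P X"
  unfolding blocks_def
  using assms exchange_map[OF assms(1,4)] utility_map[OF assms(1)] by (auto simp flip: image_UN)

section \<open>The hub-and-star economy\<close>

(*
  Hub h i k is vertex k on the path of organization i in hub h; Donor j a, Home j a and Guest j a
  form star j of organization a, where Guest j a is a patient of nxt a. The economy is built on
  this datatype and transported into nat along the injection to_nat.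
*)
datatype vtx = Hub nat nat nat | Donor nat nat | Home nat nat | Guest nat nat

instance vtx :: countable by countable_datatype

definition nxt :: "nat \<Rightarrow> nat" where
  "nxt a = a mod 3 + 1"

definition hub_len :: "nat \<Rightarrow> nat \<Rightarrow> nat" where
  "hub_len \<Delta> i = (if i = 1 then \<Delta> - \<Delta> div 2 else \<Delta> div 2)"

inductive_set gadget_arcs :: "nat \<Rightarrow> nat \<Rightarrow> (vtx \<times> vtx) set" for \<Delta> m where
  along: "h < 2 * m \<Longrightarrow> i \<in> {1,2,3} \<Longrightarrow> Suc k < hub_len \<Delta> i \<Longrightarrow>
    (Hub h i k, Hub h i (Suc k)) \<in> gadget_arcs \<Delta> m"
| across: "h < 2 * m \<Longrightarrow> i \<in> {1,2,3} \<Longrightarrow> j \<in> {1,2,3} \<Longrightarrow> i \<noteq> j \<Longrightarrow>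
    (Hub h i (hub_len \<Delta> i - 1), Hub h j 0) \<in> gadget_arcs \<Delta> m"
| to_home: "j < m \<Longrightarrow> a \<in> {1,2,3} \<Longrightarrow> (Donor j a, Home j a) \<in> gadget_arcs \<Delta> m"
| to_guest: "j < m \<Longrightarrow> a \<in> {1,2,3} \<Longrightarrow> (Donor j a, Guest j a) \<in> gadget_arcs \<Delta> m"
| from_home: "j < m \<Longrightarrow> a \<in> {1,2,3} \<Longrightarrow> (Home j a, Donor j a) \<in> gadget_arcs \<Delta> m"
| from_guest: "j < m \<Longrightarrow> a \<in> {1,2,3} \<Longrightarrow> (Guest j a, Donor j a) \<in> gadget_arcs \<Delta> m"

definition gadget_verts :: "nat \<Rightarrow> nat \<Rightarrow> vtx set" where
  "gadget_verts \<Delta> m = {Hub h i k | h i k. h < 2 * m \<and> i \<in> {1,2,3} \<and> k < hub_len \<Delta> i}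
     \<union> (\<Union>j<m. \<Union>a\<in>{1,2,3}. {Donor j a, Home j a, Guest j a})"

fun org :: "vtx \<Rightarrow> nat" where
  "org (Hub h i k) = i"
| "org (Donor j a) = a"
| "org (Home j a) = a"
| "org (Guest j a) = nxt a"

fun is_patient :: "vtx \<Rightarrow> bool" where
  "is_patient (Hub h i k) = (k = 0)"
| "is_patient (Donor j a) = False"
| "is_patient (Home j a) = True"
| "is_patient (Guest j a) = True"

definition org_verts :: "nat \<Rightarrow> nat \<Rightarrow> nat \<Rightarrow> vtx set" where
  "org_verts \<Delta> m i = {v \<in> gadget_verts \<Delta> m. org v = i}"

definition org_patients :: "nat \<Rightarrow> nat \<Rightarrow> nat \<Rightarrow> vtx set" where
  "org_patients \<Delta> m i = {v \<in> org_verts \<Delta> m i. is_patient v}"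

(* Stated for Suc 0 because the simplifier rewrites 1 :: nat to Suc 0. *)
lemma nxt_simps [simp]: "nxt (Suc 0) = 2" "nxt 2 = 3" "nxt 3 = 1"
  by (simp_all add: nxt_def)

lemma nxt_in: "a \<in> {1,2,3} \<Longrightarrow> nxt a \<in> {1,2,3} \<and> nxt a \<noteq> a"
  by (auto simp: nxt_def)

lemma hub_len_pos: "2 \<le> \<Delta> \<Longrightarrow> 0 < hub_len \<Delta> i"
  by (simp add: hub_len_def)

lemma hub_len_le: "hub_len \<Delta> i \<le> \<Delta>"
  by (simp add: hub_len_def)

lemma hub_len_nxt: "a \<in> {1,2,3} \<Longrightarrow> hub_len \<Delta> a + hub_len \<Delta> (nxt a) \<le> \<Delta>"
  by (auto simp: hub_len_def nxt_def)

lemma hub_len_total: "2 \<le> \<Delta> \<Longrightarrow> \<Delta> < hub_len \<Delta> 1 + hub_len \<Delta> 2 + hub_len \<Delta> 3"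
  by (simp add: hub_len_def)

lemma gadget_verts_subset:
  "gadget_verts \<Delta> m \<subseteq> (\<lambda>(h, i, k). Hub h i k) ` ({..<2 * m} \<times> {1,2,3} \<times> {..<\<Delta>})
     \<union> (\<Union>j<m. \<Union>a\<in>{1,2,3}. {Donor j a, Home j a, Guest j a})"
proof -
  have "Hub h i k \<in> (\<lambda>(h, i, k). Hub h i k) ` ({..<2 * m} \<times> {1,2,3} \<times> {..<\<Delta>})"
    if "h < 2 * m" "i \<in> {1,2,3}" "k < hub_len \<Delta> i" for h i k
    using that hub_len_le[of \<Delta> i] by (intro image_eqI[where x = "(h, i, k)"]) auto
  then show ?thesis unfolding gadget_verts_def by blast
qed

lemma finite_gadget_verts: "finite (gadget_verts \<Delta> m)"
  by (rule finite_subset[OF gadget_verts_subset]) auto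

lemma finite_org_patients: "finite (org_patients \<Delta> m i)"
  using finite_gadget_verts by (simp add: org_patients_def org_verts_def)

section \<open>Patients served by an exchange\<close>

lemma hub_arc_cases:
  assumes "(Hub h i k, y) \<in> gadget_arcs \<Delta> m"
  shows "Suc k < hub_len \<Delta> i \<and> y = Hub h i (Suc k) \<or>
    k = hub_len \<Delta> i - 1 \<and> (\<exists>j\<in>{1,2,3}. j \<noteq> i \<and> y = Hub h j 0)"
  using assms by cases auto

lemma cycle_hub_path:
  assumes "is_cycle (gadget_arcs \<Delta> m) d W c" "Hub h i 0 \<in> set c" "k < hub_len \<Delta> i"
  shows "Hub h i k \<in> set c"
  using assms(3)
proof (induction k)
  case 0
  show ?case using assms(2) .
next
  case (Suc k)
  have "\<And>y. (Hub h i k, y) \<in> gadget_arcs \<Delta> m \<Longrightarrow> y = Hub h i (Suc k)"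
    using Suc.prems by (auto dest: hub_arc_cases)
  then show ?case using is_cycle_forced_successor[OF assms(1)] Suc by simp
qed

lemma cycle_hub_other_head:
  assumes "2 \<le> \<Delta>" "is_cycle (gadget_arcs \<Delta> m) d W c" "Hub h i 0 \<in> set c"
  obtains j where "j \<in> {1,2,3}" "j \<noteq> i" "Hub h j 0 \<in> set c"
proof -
  let ?last = "Hub h i (hub_len \<Delta> i - 1)"
  have "?last \<in> set c"
    using cycle_hub_path[OF assms(2,3)] hub_len_pos[OF assms(1)] by simp
  then obtain y where y: "y \<in> set c" "(?last, y) \<in> gadget_arcs \<Delta> m"
    using is_cycle_successor[OF assms(2)] by blast
  have "\<not> Suc (hub_len \<Delta> i - 1) < hub_len \<Delta> i" by simp
  then show ?thesis using hub_arc_cases[OF y(2)] y(1) that by blast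
qed

lemma cycle_not_all_hub_heads:
  assumes "2 \<le> \<Delta>" "is_cycle (gadget_arcs \<Delta> m) \<Delta> W c"
  shows "\<exists>i\<in>{1,2,3}. Hub h i 0 \<notin> set c"
proof (rule ccontr)
  assume all: "\<not> ?thesis"
  let ?path = "\<lambda>i. (\<lambda>k. Hub h i k) ` {..<hub_len \<Delta> i}"
  have "(\<Union>i\<in>{1,2,3}. ?path i) \<subseteq> set c"
    using cycle_hub_path[OF assms(2)] all by blast
  then have "card (\<Union>i\<in>{1,2,3}. ?path i) \<le> length c"
    using card_mono[of "set c"] card_length[of c] by (meson List.finite_set order_trans)
  moreover have "card (\<Union>i\<in>{1,2,3::nat}. ?path i) = (\<Sum>i\<in>{1,2,3}. hub_len \<Delta> i)"
    by (subst card_UN_disjoint) (auto simp: card_image inj_on_def)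
  moreover have "length c \<le> \<Delta>" using assms(2) by (simp add: is_cycle_def)
  ultimately show False using hub_len_total[OF assms(1)] by simp
qed

(*
  The cycle through the head of path 1 reaches a second head but misses some head j; the cycle
  through j is disjoint from it and again needs a second head, so four heads would be needed.
*)
lemma hub_heads_covered_le:
  assumes "2 \<le> \<Delta>" "exchange (gadget_arcs \<Delta> m) \<Delta> W Y"
  shows "card ((\<lambda>i. Hub h i 0) ` {1,2,3} \<inter> covered Y) \<le> 2"
proof (rule ccontr)
  let ?S = "(\<lambda>i. Hub h i 0) ` {1,2,3::nat}"
  assume "\<not> ?thesis"
  moreover have "card ?S \<le> 3" by (rule order_trans[OF card_image_le]) auto
  moreover have "card (?S \<inter> covered Y) \<le> card ?S" by (intro card_mono) auto
  ultimately have "?S \<inter> covered Y = ?S" by (intro card_subset_eq) auto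
  then have all: "Hub h i 0 \<in> covered Y" if "i \<in> {1,2,3}" for i using that by blast
  have cyc: "is_cycle (gadget_arcs \<Delta> m) \<Delta> W c" if "c \<in> Y" for c
    using assms(2) that by (simp add: exchange_def)
  obtain c where c: "c \<in> Y" "Hub h 1 0 \<in> set c" using all[of 1] by (auto simp: covered_def)
  obtain j where j: "j \<in> {1,2,3}" "Hub h j 0 \<notin> set c"
    using cycle_not_all_hub_heads[OF assms(1) cyc[OF c(1)]] by blast
  obtain c' where c': "c' \<in> Y" "Hub h j 0 \<in> set c'" using all[OF j(1)] by (auto simp: covered_def)
  have disj: "set c \<inter> set c' = {}" using assms(2) c c' j unfolding exchange_def by metis
  obtain j' where j': "j' \<in> {1,2,3}" "j' \<noteq> j" "Hub h j' 0 \<in> set c'"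
    using cycle_hub_other_head[OF assms(1) cyc[OF c'(1)] c'(2)] .
  obtain j'' where j'': "j'' \<in> {1,2,3}" "j'' \<noteq> 1" "Hub h j'' 0 \<in> set c"
    using cycle_hub_other_head[OF assms(1) cyc[OF c(1)] c(2)] .
  have "j \<noteq> 1" "j' \<noteq> 1" "j'' \<noteq> j" "j'' \<noteq> j'"
    using j j' j'' c(2) disj by auto
  then show False using j(1) j'(1,2) j''(1,2) by auto
qed

lemma star_covered_le:
  assumes "exchange (gadget_arcs \<Delta> m) d W Y"
  shows "card ({Home j a, Guest j a} \<inter> covered Y) \<le> 1"
proof -
  have "Home j a \<notin> covered Y \<or> Guest j a \<notin> covered Y"
  proof (rule ccontr)
    assume "\<not> (Home j a \<notin> covered Y \<or> Guest j a \<notin> covered Y)"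
    then have "Home j a = Guest j a"
      using exchange_common_successor[OF assms, of "Home j a" "Guest j a" "Donor j a"]
      by (auto elim: gadget_arcs.cases)
    then show False by simp
  qed
  then show ?thesis by (auto simp: Int_insert_left)
qed

lemma utility_gadget_le:
  assumes "2 \<le> \<Delta>" "exchange (gadget_arcs \<Delta> m) \<Delta> W Y"
  shows "utility (\<Union>i\<in>{1,2,3}. org_patients \<Delta> m i) Y \<le> 7 * m"
proof -
  let ?hub = "\<lambda>h. (\<lambda>i. Hub h i 0) ` {1,2,3::nat} \<inter> covered Y"
  let ?star = "\<lambda>j. \<Union>a\<in>{1,2,3::nat}. {Home j a, Guest j a} \<inter> covered Y"
  have "(\<Union>i\<in>{1,2,3}. org_patients \<Delta> m i) \<inter> covered Y \<subseteq> (\<Union>h<2*m. ?hub h) \<union> (\<Union>j<m. ?star j)"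
    by (auto simp: org_patients_def org_verts_def gadget_verts_def)
  then have "utility (\<Union>i\<in>{1,2,3}. org_patients \<Delta> m i) Y \<le> card ((\<Union>h<2*m. ?hub h) \<union> (\<Union>j<m. ?star j))"
    unfolding utility_eq_card_covered by (intro card_mono) auto
  also have "\<dots> \<le> card (\<Union>h<2*m. ?hub h) + card (\<Union>j<m. ?star j)"
    by (rule card_Un_le)
  also have "card (\<Union>h<2*m. ?hub h) \<le> (\<Sum>h<2*m. card (?hub h))"
    by (rule card_UN_le) simp
  also have "\<dots> \<le> (\<Sum>h<2*m. 2)"
    by (intro sum_mono hub_heads_covered_le[OF assms])
  also have "card (\<Union>j<m. ?star j) \<le> (\<Sum>j<m. card (?star j))"
    by (rule card_UN_le) simp
  also have "\<dots> \<le> (\<Sum>j<m. \<Sum>a\<in>{1,2,3::nat}. card ({Home j a, Guest j a} \<inter> covered Y))"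
    by (intro sum_mono card_UN_le) simp
  also have "\<dots> \<le> (\<Sum>j<m. \<Sum>a\<in>{1,2,3::nat}. 1)"
    by (intro sum_mono star_covered_le[OF assms(2)])
  finally show ?thesis by simp
qed

section \<open>Exchanges of single organizations and of pairs\<close>

definition hub_cycle :: "nat \<Rightarrow> nat \<Rightarrow> nat \<Rightarrow> nat \<Rightarrow> vtx list" where
  "hub_cycle \<Delta> h a b = map (Hub h a) [0..<hub_len \<Delta> a] @ map (Hub h b) [0..<hub_len \<Delta> b]"

lemma hub_path_successively:
  assumes "h < 2 * m" "i \<in> {1,2,3}"
  shows "successively (\<lambda>x y. (x, y) \<in> gadget_arcs \<Delta> m) (map (Hub h i) [0..<hub_len \<Delta> i])"
  using assms by (auto simp: successively_map successively_upt_0 intro: gadget_arcs.along)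

lemma hub_cycle_is_cycle:
  assumes "2 \<le> \<Delta>" "h < 2 * m" "a \<in> {1,2,3}" "b \<in> {1,2,3}" "a \<noteq> b"
    and "hub_len \<Delta> a + hub_len \<Delta> b \<le> \<Delta>" "set (hub_cycle \<Delta> h a b) \<subseteq> W"
  shows "is_cycle (gadget_arcs \<Delta> m) \<Delta> W (hub_cycle \<Delta> h a b)"
proof (rule is_cycleI)
  have pos: "0 < hub_len \<Delta> a" "0 < hub_len \<Delta> b" using hub_len_pos[OF assms(1)] by auto
  then show "hub_cycle \<Delta> h a b \<noteq> []" by (simp add: hub_cycle_def)
  show "distinct (hub_cycle \<Delta> h a b)"
    using assms(5) by (auto simp: hub_cycle_def distinct_map inj_on_def)
  show "length (hub_cycle \<Delta> h a b) \<le> \<Delta>" using assms(6) by (simp add: hub_cycle_def)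
  show "set (hub_cycle \<Delta> h a b) \<subseteq> W" by (rule assms(7))
  have "(Hub h a (hub_len \<Delta> a - 1), Hub h b 0) \<in> gadget_arcs \<Delta> m"
    using assms by (intro gadget_arcs.across) auto
  then show "successively (\<lambda>x y. (x, y) \<in> gadget_arcs \<Delta> m) (hub_cycle \<Delta> h a b)"
    using hub_path_successively[OF assms(2,3)] hub_path_successively[OF assms(2,4)] pos
    by (simp add: hub_cycle_def successively_append_iff last_map hd_map)
  have "(Hub h b (hub_len \<Delta> b - 1), Hub h a 0) \<in> gadget_arcs \<Delta> m"
    using assms by (intro gadget_arcs.across) auto
  then show "(last (hub_cycle \<Delta> h a b), hd (hub_cycle \<Delta> h a b)) \<in> gadget_arcs \<Delta> m"
    using pos by (simp add: hub_cycle_def last_map hd_map)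
qed

definition single_exchange :: "nat \<Rightarrow> nat \<Rightarrow> vtx list set" where
  "single_exchange m a = (\<lambda>j. [Donor j a, Home j a]) ` {..<m}"

(* g is Home or Guest: the partner served by the donors of the stars of a. *)
definition pair_exchange :: "nat \<Rightarrow> nat \<Rightarrow> nat \<Rightarrow> (nat \<Rightarrow> nat \<Rightarrow> vtx) \<Rightarrow> vtx list set" where
  "pair_exchange \<Delta> m a g = (\<lambda>h. hub_cycle \<Delta> h a (nxt a)) ` {..<2 * m}
     \<union> (\<lambda>j. [Donor j a, g j a]) ` {..<m} \<union> (\<lambda>j. [Donor j (nxt a), Home j (nxt a)]) ` {..<m}"

lemma exchange_single_exchange:
  assumes "2 \<le> \<Delta>" "a \<in> {1,2,3}"
  shows "exchange (gadget_arcs \<Delta> m) \<Delta> (org_verts \<Delta> m a) (single_exchange m a)"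
  using assms unfolding exchange_def single_exchange_def
  by (auto intro!: is_cycle_two gadget_arcs.intros simp: org_verts_def gadget_verts_def)

lemma set_hub_cycle:
  "set (hub_cycle \<Delta> h a b) = Hub h a ` {..<hub_len \<Delta> a} \<union> Hub h b ` {..<hub_len \<Delta> b}"
  by (auto simp: hub_cycle_def)

lemma exchange_pair_exchange:
  assumes "2 \<le> \<Delta>" "a \<in> {1,2,3}" "g \<in> {Home, Guest}"
  shows "exchange (gadget_arcs \<Delta> m) \<Delta> (org_verts \<Delta> m a \<union> org_verts \<Delta> m (nxt a)) (pair_exchange \<Delta> m a g)"
proof (rule exchangeI_owner)
  let ?W = "org_verts \<Delta> m a \<union> org_verts \<Delta> m (nxt a)"
  have b: "nxt a \<in> {1,2,3}" "nxt a \<noteq> a" using nxt_in[OF assms(2)] by auto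
  have hub: "is_cycle (gadget_arcs \<Delta> m) \<Delta> ?W (hub_cycle \<Delta> h a (nxt a))" if "h < 2 * m" for h
  proof (rule hub_cycle_is_cycle[OF assms(1) that assms(2) b(1) b(2)[symmetric] hub_len_nxt[OF assms(2)]])
    show "set (hub_cycle \<Delta> h a (nxt a)) \<subseteq> ?W"
      using that assms(2) b(1) by (auto simp: set_hub_cycle org_verts_def gadget_verts_def)
  qed
  have star: "is_cycle (gadget_arcs \<Delta> m) \<Delta> ?W [Donor j a, g j a]" if "j < m" for j
    using assms that by (auto intro!: is_cycle_two gadget_arcs.intros simp: org_verts_def gadget_verts_def)
  have star': "is_cycle (gadget_arcs \<Delta> m) \<Delta> ?W [Donor j (nxt a), Home j (nxt a)]" if "j < m" for j
    using assms that b by (intro is_cycle_two gadget_arcs.intros) (auto simp: org_verts_def gadget_verts_def)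
  show "is_cycle (gadget_arcs \<Delta> m) \<Delta> ?W c" if "c \<in> pair_exchange \<Delta> m a g" for c
    using that hub star star' unfolding pair_exchange_def by blast
  show "(\<lambda>v. case v of Hub h _ _ \<Rightarrow> hub_cycle \<Delta> h a (nxt a)
          | Donor j b \<Rightarrow> if b = a then [Donor j a, g j a] else [Donor j b, Home j b]
          | Home j b \<Rightarrow> [Donor j b, Home j b] | Guest j b \<Rightarrow> [Donor j b, Guest j b]) x = c"
    if "c \<in> pair_exchange \<Delta> m a g" "x \<in> set c" for c x
    using that assms(3) b(2) unfolding pair_exchange_def by (auto simp: set_hub_cycle)
qed

lemma single_exchange_utility:
  assumes "a \<in> {1,2,3}"
  shows "m \<le> utility (org_patients \<Delta> m a) (single_exchange m a)"
proof -
  let ?K = "(\<lambda>j. Home j a) ` {..<m}"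
  have "?K \<subseteq> org_patients \<Delta> m a"
    using assms by (auto simp: org_patients_def org_verts_def gadget_verts_def)
  moreover have "?K \<subseteq> covered (single_exchange m a)"
    by (auto simp: covered_def single_exchange_def)
  moreover have "card ?K = m" by (simp add: card_image inj_on_def)
  ultimately show ?thesis using card_le_utility[OF finite_org_patients] by metis
qed

lemma pair_exchange_covers:
  assumes "2 \<le> \<Delta>"
  shows "(\<lambda>h. Hub h a 0) ` {..<2 * m} \<union> (\<lambda>h. Hub h (nxt a) 0) ` {..<2 * m}
      \<union> (\<lambda>j. Home j (nxt a)) ` {..<m} \<union> (\<lambda>j. g j a) ` {..<m} \<subseteq> covered (pair_exchange \<Delta> m a g)"
  using hub_len_pos[OF assms] unfolding covered_def pair_exchange_def
  by (fastforce simp: set_hub_cycle)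

lemma card_heads_homes_guests:
  fixes i a b m :: nat
  defines "H \<equiv> (\<lambda>h. Hub h i 0) ` {..<2 * m}" and "P \<equiv> (\<lambda>j. Home j a) ` {..<m}"
    and "Q \<equiv> (\<lambda>j. Guest j b) ` {..<m}"
  shows "card H = 2 * m" "card (H \<union> P) = 3 * m" "card (H \<union> P \<union> Q) = 4 * m"
proof -
  have card: "card H = 2 * m" "card P = m" "card Q = m"
    unfolding H_def P_def Q_def by (simp_all add: card_image inj_on_def)
  have "finite H" "finite P" "finite Q" "H \<inter> P = {}" "(H \<union> P) \<inter> Q = {}"
    unfolding H_def P_def Q_def by auto
  then show "card H = 2 * m" "card (H \<union> P) = 3 * m" "card (H \<union> P \<union> Q) = 4 * m"
    using card by (simp_all add: card_Un_disjoint)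
qed

lemma pair_exchange_utility:
  assumes "2 \<le> \<Delta>" "a \<in> {1,2,3}"
  shows "3 * m \<le> utility (org_patients \<Delta> m a) (pair_exchange \<Delta> m a Home)"
    and "3 * m \<le> utility (org_patients \<Delta> m (nxt a)) (pair_exchange \<Delta> m a Home)"
    and "2 * m \<le> utility (org_patients \<Delta> m a) (pair_exchange \<Delta> m a Guest)"
    and "4 * m \<le> utility (org_patients \<Delta> m (nxt a)) (pair_exchange \<Delta> m a Guest)"
proof -
  let ?heads = "\<lambda>i. (\<lambda>h. Hub h i 0) ` {..<2 * m}"
  let ?homes = "\<lambda>i. (\<lambda>j. Home j i) ` {..<m}"
  let ?guests = "\<lambda>i. (\<lambda>j. Guest j i) ` {..<m}"
  have b: "nxt a \<in> {1,2,3}" using nxt_in[OF assms(2)] by blast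
  have pat: "?heads i \<union> ?homes i \<subseteq> org_patients \<Delta> m i" "?guests a \<subseteq> org_patients \<Delta> m (nxt a)"
    if "i \<in> {1,2,3}" for i
    using that assms(2) hub_len_pos[OF assms(1)]
    by (auto simp: org_patients_def org_verts_def gadget_verts_def)
  have cov: "?heads a \<union> ?heads (nxt a) \<union> ?homes (nxt a) \<union> ?homes a \<subseteq> covered (pair_exchange \<Delta> m a Home)"
    "?heads a \<union> ?heads (nxt a) \<union> ?homes (nxt a) \<union> ?guests a \<subseteq> covered (pair_exchange \<Delta> m a Guest)"
    using pair_exchange_covers[OF assms(1)] by blast+
  show "3 * m \<le> utility (org_patients \<Delta> m a) (pair_exchange \<Delta> m a Home)"
    using card_le_utility[OF finite_org_patients pat(1)[OF assms(2)]] cov(1)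
      card_heads_homes_guests(2)[of a m a] by auto
  show "3 * m \<le> utility (org_patients \<Delta> m (nxt a)) (pair_exchange \<Delta> m a Home)"
    using card_le_utility[OF finite_org_patients pat(1)[OF b]] cov(1)
      card_heads_homes_guests(2)[of "nxt a" m "nxt a"] by auto
  show "2 * m \<le> utility (org_patients \<Delta> m a) (pair_exchange \<Delta> m a Guest)"
    using card_le_utility[OF finite_org_patients, of "?heads a"] pat(1)[OF assms(2)] cov(2)
      card_heads_homes_guests(1)[of a m] by (metis le_sup_iff)
  show "4 * m \<le> utility (org_patients \<Delta> m (nxt a)) (pair_exchange \<Delta> m a Guest)"
    using card_le_utility[OF finite_org_patients, of "?heads (nxt a) \<union> ?homes (nxt a) \<union> ?guests a"]
      pat[OF b] pat(2)[OF assms(2)] cov(2) card_heads_homes_guests(3)[of "nxt a" m "nxt a" a] by auto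
qed

section \<open>The economy on natural-number vertices\<close>

definition gadget_Vo :: "nat \<Rightarrow> nat \<Rightarrow> nat \<Rightarrow> nat set" where
  "gadget_Vo \<Delta> m = (\<lambda>i. to_nat ` org_verts \<Delta> m i)"

definition gadget_Uo :: "nat \<Rightarrow> nat \<Rightarrow> nat \<Rightarrow> nat set" where
  "gadget_Uo \<Delta> m = (\<lambda>i. to_nat ` org_patients \<Delta> m i)"

definition gadget_E :: "nat \<Rightarrow> nat \<Rightarrow> (nat \<times> nat) set" where
  "gadget_E \<Delta> m = map_prod to_nat to_nat ` gadget_arcs \<Delta> m"

lemma org_of_gadget_vert: "v \<in> gadget_verts \<Delta> m \<Longrightarrow> org v \<in> {1,2,3}"
  by (auto simp: gadget_verts_def nxt_def)

lemma econ_V_gadget: "econ_V 3 (gadget_Vo \<Delta> m) = to_nat ` gadget_verts \<Delta> m"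
  using org_of_gadget_vert by (fastforce simp: econ_V_def gadget_Vo_def org_verts_def)

lemma card_econ_V_gadget: "card (econ_V 3 (gadget_Vo \<Delta> m)) = card (gadget_verts \<Delta> m)"
  unfolding econ_V_gadget by (simp add: card_image)

lemma card_gadget_verts_le: "card (gadget_verts \<Delta> m) \<le> (6 * \<Delta> + 9) * m"
proof -
  let ?hubs = "(\<lambda>(h, i, k). Hub h i k) ` ({..<2 * m} \<times> {1,2,3::nat} \<times> {..<\<Delta>})"
  let ?stars = "\<Union>j<m. \<Union>a\<in>{1,2,3::nat}. {Donor j a, Home j a, Guest j a}"
  have "card (gadget_verts \<Delta> m) \<le> card (?hubs \<union> ?stars)"
    by (rule card_mono[OF _ gadget_verts_subset]) auto
  also have "\<dots> \<le> card ?hubs + card ?stars" by (rule card_Un_le)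
  also have "card ?hubs \<le> 6 * \<Delta> * m"
    using card_image_le[of "{..<2 * m} \<times> {1,2,3::nat} \<times> {..<\<Delta>}" "\<lambda>(h, i, k). Hub h i k"]
    by (simp add: card_cartesian_product algebra_simps)
  also have "card ?stars \<le> (\<Sum>j<m. \<Sum>a\<in>{1,2,3::nat}. card {Donor j a, Home j a, Guest j a})"
    by (intro order_trans[OF card_UN_le] sum_mono card_UN_le) auto
  also have "\<dots> \<le> 9 * m" by simp
  finally show ?thesis by (simp add: algebra_simps)
qed

lemma card_gadget_verts_ge: "m \<le> card (gadget_verts \<Delta> m)"
proof -
  have "(\<lambda>j. Home j 1) ` {..<m} \<subseteq> gadget_verts \<Delta> m" by (auto simp: gadget_verts_def)
  then have "card ((\<lambda>j. Home j 1) ` {..<m}) \<le> card (gadget_verts \<Delta> m)"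
    using finite_gadget_verts by (rule card_mono[rotated])
  then show ?thesis by (simp add: card_image inj_on_def)
qed

lemma gadget_arcs_subset:
  assumes "2 \<le> \<Delta>"
  shows "gadget_arcs \<Delta> m \<subseteq> gadget_verts \<Delta> m \<times> gadget_verts \<Delta> m"
proof (rule subrelI)
  fix x y assume "(x, y) \<in> gadget_arcs \<Delta> m"
  then show "(x, y) \<in> gadget_verts \<Delta> m \<times> gadget_verts \<Delta> m"
    using hub_len_pos[OF assms] by cases (auto simp: gadget_verts_def)
qed

lemma valid_economy_gadget:
  assumes "2 \<le> \<Delta>"
  shows "valid_economy 3 (gadget_Vo \<Delta> m) (gadget_Uo \<Delta> m) (gadget_E \<Delta> m)"
  unfolding valid_economy_def
proof (intro conjI ballI impI allI)
  fix i :: nat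
  show "finite (gadget_Vo \<Delta> m i)"
    using finite_gadget_verts by (simp add: gadget_Vo_def org_verts_def)
  show "gadget_Uo \<Delta> m i \<subseteq> gadget_Vo \<Delta> m i"
    by (auto simp: gadget_Uo_def gadget_Vo_def org_patients_def)
next
  fix i j :: nat assume "i \<noteq> j"
  then show "gadget_Vo \<Delta> m i \<inter> gadget_Vo \<Delta> m j = {}"
    by (auto simp: gadget_Vo_def org_verts_def)
next
  show "gadget_E \<Delta> m \<subseteq> econ_V 3 (gadget_Vo \<Delta> m) \<times> econ_V 3 (gadget_Vo \<Delta> m)"
    using gadget_arcs_subset[OF assms] unfolding econ_V_gadget gadget_E_def by auto
next
  fix v
  show "(v, v) \<notin> gadget_E \<Delta> m"
    by (auto simp: gadget_E_def elim: gadget_arcs.cases)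
qed

lemma three_orgs_arith:
  fixes u :: "nat \<Rightarrow> nat"
  assumes "\<And>a. a \<in> {1,2,3} \<Longrightarrow> m \<le> u a"
    and "\<And>a. a \<in> {1,2,3} \<Longrightarrow> 3 * m \<le> u a \<or> 3 * m \<le> u (nxt a)"
    and "\<And>a. a \<in> {1,2,3} \<Longrightarrow> 2 * m \<le> u a \<or> 4 * m \<le> u (nxt a)"
    and "u 1 + u 2 + u 3 < 8 * m"
  shows False
proof -
  have "m \<le> u 1" "m \<le> u 2" "m \<le> u 3" using assms(1) by auto
  moreover have "3 * m \<le> u 1 \<or> 3 * m \<le> u 2" "3 * m \<le> u 2 \<or> 3 * m \<le> u 3" "3 * m \<le> u 3 \<or> 3 * m \<le> u 1"
    using assms(2)[of 1] assms(2)[of 2] assms(2)[of 3] by simp_all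
  moreover have "2 * m \<le> u 1 \<or> 4 * m \<le> u 2" "2 * m \<le> u 2 \<or> 4 * m \<le> u 3" "2 * m \<le> u 3 \<or> 4 * m \<le> u 1"
    using assms(3)[of 1] assms(3)[of 2] assms(3)[of 3] by simp_all
  ultimately show False using assms(4) by linarith
qed

lemma mult_nat_floor_div_less:
  fixes C N m \<Delta> :: nat
  assumes "N \<le> C * m" "0 < m"
  shows "\<Delta> * nat \<lfloor>real N / real (\<Delta> * C + 1)\<rfloor> < m"
proof -
  let ?K = "\<Delta> * C + 1"
  have "nat \<lfloor>real N / real ?K\<rfloor> = N div ?K"
    using floor_divide_of_nat_eq[where 'a = real, of N ?K] by simp
  moreover have "\<Delta> * (N div ?K) < m"
  proof (rule mult_right_less_imp_less)
    have "\<Delta> * (N div ?K) * ?K \<le> \<Delta> * N"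
      using mult_le_mono2[OF div_times_less_eq_dividend, of \<Delta> N ?K] by (simp only: mult.assoc)
    also have "\<dots> \<le> \<Delta> * C * m" using assms(1) by (simp add: mult.assoc)
    also have "\<dots> < m * ?K" using assms(2) by (simp add: algebra_simps)
    finally show "\<Delta> * (N div ?K) * ?K < m * ?K" .
  qed simp
  ultimately show ?thesis by simp
qed

lemma gadget_supp_utility_le:
  assumes "2 \<le> \<Delta>" "finite V0"
    and "exchange (supp_graph (econ_V 3 (gadget_Vo \<Delta> m)) (gadget_E \<Delta> m) V0 Out) \<Delta>
      (econ_V 3 (gadget_Vo \<Delta> m) \<union> V0) X"
  shows "(\<Sum>i\<in>{1,2,3}. utility (gadget_Uo \<Delta> m i) X) \<le> 7 * m + \<Delta> * card V0"
proof -
  let ?P = "\<Union>i\<in>{1,2,3}. org_patients \<Delta> m i"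
  let ?Y = "{c \<in> X. set c \<inter> V0 = {}}"
  have "exchange (map_prod to_nat to_nat ` gadget_arcs \<Delta> m) \<Delta> (econ_V 3 (gadget_Vo \<Delta> m)) ?Y"
    using exchange_supp_graph_avoiding[OF assms(3)] by (simp add: gadget_E_def)
  then obtain Y' where Y': "exchange (gadget_arcs \<Delta> m) \<Delta> (to_nat -` econ_V 3 (gadget_Vo \<Delta> m)) Y'"
    "?Y = map to_nat ` Y'"
    using exchange_map_vimage[OF inj_to_nat] by blast
  have patients: "(\<Union>i\<in>{1,2,3}. gadget_Uo \<Delta> m i) = to_nat ` ?P"
    by (simp add: gadget_Uo_def image_Un)
  have "(\<Sum>i\<in>{1,2,3}. utility (gadget_Uo \<Delta> m i) X) = utility (to_nat ` ?P) X"
    unfolding patients[symmetric]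
    by (rule sum_utility_disjoint)
      (simp_all add: gadget_Uo_def finite_org_patients, auto simp: org_patients_def org_verts_def)
  also have "\<dots> \<le> utility (to_nat ` ?P) ?Y + \<Delta> * card V0"
    by (rule utility_supp_graph_le[OF assms(3,2)])
  also have "utility (to_nat ` ?P) ?Y = utility ?P Y'"
    unfolding Y'(2) by (rule utility_map[OF inj_to_nat])
  also have "\<dots> \<le> 7 * m" by (rule utility_gadget_le[OF assms(1) Y'(1)])
  finally show ?thesis by simp
qed

lemma gadget_not_blocked:
  assumes "2 \<le> \<Delta>" "a \<in> {1,2,3}"
    and not_blocked: "\<And>P. \<not> blocks 3 (gadget_Vo \<Delta> m) (gadget_Uo \<Delta> m) (gadget_E \<Delta> m) \<Delta> P X"
  shows "m \<le> utility (gadget_Uo \<Delta> m a) X"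
    and "3 * m \<le> utility (gadget_Uo \<Delta> m a) X \<or> 3 * m \<le> utility (gadget_Uo \<Delta> m (nxt a)) X"
    and "2 * m \<le> utility (gadget_Uo \<Delta> m a) X \<or> 4 * m \<le> utility (gadget_Uo \<Delta> m (nxt a)) X"
proof -
  have no_improvement: "\<not> (\<forall>i\<in>P. utility (gadget_Uo \<Delta> m i) X < utility (org_patients \<Delta> m i) X')"
    if "P \<noteq> {}" "P \<subseteq> {1..3}" "exchange (gadget_arcs \<Delta> m) \<Delta> (\<Union>i\<in>P. org_verts \<Delta> m i) X'" for P X'
    using not_blocked[of P] blocks_map[OF inj_to_nat that, of "org_patients \<Delta> m" X]
    unfolding gadget_Vo_def gadget_Uo_def gadget_E_def by blast
  have "{a} \<subseteq> {1..3}" using assms(2) by auto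
  then have "\<not> utility (gadget_Uo \<Delta> m a) X < utility (org_patients \<Delta> m a) (single_exchange m a)"
    using no_improvement[of "{a}" "single_exchange m a"] exchange_single_exchange[OF assms(1,2)]
    by simp
  then show "m \<le> utility (gadget_Uo \<Delta> m a) X"
    using single_exchange_utility[OF assms(2), where \<Delta> = \<Delta> and m = m] by linarith
  have "{a, nxt a} \<subseteq> {1..3}" using assms(2) nxt_in[OF assms(2)] by auto
  then have "\<not> (utility (gadget_Uo \<Delta> m a) X < utility (org_patients \<Delta> m a) (pair_exchange \<Delta> m a g) \<and>
      utility (gadget_Uo \<Delta> m (nxt a)) X < utility (org_patients \<Delta> m (nxt a)) (pair_exchange \<Delta> m a g))"
    if "g \<in> {Home, Guest}" for g
    using no_improvement[of "{a, nxt a}" "pair_exchange \<Delta> m a g"] exchange_pair_exchange[OF assms(1,2) that]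
    by simp
  then show "3 * m \<le> utility (gadget_Uo \<Delta> m a) X \<or> 3 * m \<le> utility (gadget_Uo \<Delta> m (nxt a)) X"
    and "2 * m \<le> utility (gadget_Uo \<Delta> m a) X \<or> 4 * m \<le> utility (gadget_Uo \<Delta> m (nxt a)) X"
    using pair_exchange_utility[OF assms(1,2)] by (meson insertCI order.strict_trans2 not_le)+
qed

lemma gadget_supp_core_empty:
  assumes "2 \<le> \<Delta>" "\<Delta> * d < m"
  shows "supp_core_empty 3 (gadget_Vo \<Delta> m) (gadget_Uo \<Delta> m) (gadget_E \<Delta> m) \<Delta> d"
  unfolding supp_core_empty_def in_supp_core_def
proof clarify
  fix V0 Out X
  assume V0: "finite V0" "card V0 \<le> d"
    and X: "exchange (supp_graph (econ_V 3 (gadget_Vo \<Delta> m)) (gadget_E \<Delta> m) V0 Out) \<Delta>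
      (econ_V 3 (gadget_Vo \<Delta> m) \<union> V0) X"
    and not_blocked: "\<forall>P. \<not> blocks 3 (gadget_Vo \<Delta> m) (gadget_Uo \<Delta> m) (gadget_E \<Delta> m) \<Delta> P X"
  let ?u = "\<lambda>i. utility (gadget_Uo \<Delta> m i) X"
  have "?u 1 + ?u 2 + ?u 3 \<le> 7 * m + \<Delta> * card V0"
    using gadget_supp_utility_le[OF assms(1) V0(1) X] by simp
  then have "?u 1 + ?u 2 + ?u 3 < 8 * m"
    using mult_le_mono2[OF V0(2), of \<Delta>] assms(2) by linarith
  then show False
    using three_orgs_arith[of m ?u] gadget_not_blocked[OF assms(1) _ not_blocked[rule_format]] by blast
qed

theorem mainTheorem4:
  fixes \<Delta> :: nat
  assumes "\<Delta> \<ge> 2"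
  shows "\<exists>\<kappa>::real. \<kappa> > 0 \<and>
    (\<forall>M::nat. \<exists>Vo Uo E. valid_economy 3 Vo Uo E \<and> card (econ_V 3 Vo) \<ge> M \<and>
        supp_core_empty 3 Vo Uo E \<Delta> (nat \<lfloor>\<kappa> * real (card (econ_V 3 Vo))\<rfloor>))"
proof -
  define \<kappa> :: real where "\<kappa> = 1 / real (\<Delta> * (6 * \<Delta> + 9) + 1)"
  have "\<Delta> * nat \<lfloor>\<kappa> * real (card (econ_V 3 (gadget_Vo \<Delta> (Suc M))))\<rfloor> < Suc M" for M
    using mult_nat_floor_div_less[OF card_gadget_verts_le, of "Suc M" \<Delta>]
    by (simp add: \<kappa>_def card_econ_V_gadget)
  then have "supp_core_empty 3 (gadget_Vo \<Delta> (Suc M)) (gadget_Uo \<Delta> (Suc M)) (gadget_E \<Delta> (Suc M)) \<Delta>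
      (nat \<lfloor>\<kappa> * real (card (econ_V 3 (gadget_Vo \<Delta> (Suc M))))\<rfloor>)" for M
    by (rule gadget_supp_core_empty[OF assms])
  moreover have "M \<le> card (econ_V 3 (gadget_Vo \<Delta> (Suc M)))" for M
    using card_gadget_verts_ge[of "Suc M" \<Delta>] by (simp add: card_econ_V_gadget)
  moreover have "\<kappa> > 0" by (simp add: \<kappa>_def add_pos_nonneg)
  ultimately show ?thesis using valid_economy_gadget[OF assms] by blast
qed

end
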